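(* The complement of $\mathcal S_1\cup\mathcal S_2$ in the invariant torsion variety $\mathcal M\cong\mathbb{RP}^1\times\mathbb{RP}^2$ contains exactly two components $\mathcal M_\pm$. The isomorphism classes of the Lie algebras $\mathfrak g_{\mathbf x,\mathbf y}$ corresponding to points of $\mathcal M$ are as follows: (1) points of $\mathcal M_+$ correspond to the semi-simple Lie algebra $\mathfrak{so}(3)\oplus\mathfrak{so}(3)$; (2) points of $\mathcal M_-$ correspond to the semi-simple Lie algebra $\mathfrak{so}(3,\mathbb C)$; (3) points of $\mathcal S_1\setminus \mathcal C$ correspond to the semi-direct product $\mathfrak{so}(3)\ltimes\mathbb R^3$; (4) points of $\mathcal S_2\setminus \mathcal C$ correspond to the direct sum $\mathfrak{so}(3)\oplus\mathbb R^3$; (5) points of $\mathcal C = \mathcal S_1\cap \mathcal S_2$ correspond to the nilpotent Lie algebra $(0,0,0,12,13,23)$ (i.e. with a basis satisfying $df^1=df^2=df^3=0$, $df^4=f^{12}$, $df^5=f^{13}$, $df^6=f^{23}$).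
   Context: Represent a point of $\mathcal M\cong\mathbb{RP}^1\times\mathbb{RP}^2$ by a pair of nonzero polynomials $\mathbf x=x_1u_1+x_2u_2$, $\mathbf y=y_1u_1^2+y_2u_1u_2+y_3u_2^2$ (up to independent scaling). To it corresponds the Lie algebra $\mathfrak g_{\mathbf x,\mathbf y}$ with a basis $e^1,\dots,e^6$ of its dual satisfying ($e^{ij}=e^i\wedge e^j$): $de^1=(x_2y_1-x_1y_2)e^{35}-x_1y_3(e^{36}+e^{45})-x_2y_3e^{46}$, $de^3=-(x_2y_1-x_1y_2)e^{15}+x_1y_3(e^{16}+e^{25})+x_2y_3e^{26}$, $de^5=(x_2y_1-x_1y_2)e^{13}-x_1y_3(e^{14}+e^{23})-x_2y_3e^{24}$, $de^2=x_1y_1e^{35}-(x_1y_3-y_2x_2)e^{46}+x_2y_1(e^{36}+e^{45})$, $de^4=-x_1y_1e^{15}+(x_1y_3-y_2x_2)e^{26}-x_2y_1(e^{16}+e^{25})$, $de^6=x_1y_1e^{13}-(x_1y_3-y_2x_2)e^{24}+x_2y_1(e^{14}+e^{23})$ (these are exactly the left-invariant $SO(3)$-structures with invariant intrinsic torsion whose flat connection has invariant torsion, up to scale). Let $\Delta(\mathbf y)=y_2^2-4y_1y_3$ and $R(\mathbf x,\mathbf y)=x_2^2y_1+y_3x_1^2-y_2x_2x_1$ (discriminant and resultant). Define the subvarieties $\mathcal M_+=\{\Delta>0,R\neq0\}$, $\mathcal M_-=\{\Delta<0,R\neq0\}$, $\mathcal S_1=\{\Delta=0\}$, $\mathcal S_2=\{R=0\}$,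 $\mathcal C=\mathcal S_1\cap\mathcal S_2$ (the locus where $\mathbf y$ is a multiple of $\mathbf x^2$). *)

theory Defs
  imports "HOL-Analysis.Analysis"
begin

text \<open>The 2-form e^{ij} on real^6 (indices 1..6; note that in the numeral type 6
  the literal 6 denotes the sixth, distinct, element).\<close>
definition e2 :: "6 \<Rightarrow> 6 \<Rightarrow> real^6 \<Rightarrow> real^6 \<Rightarrow> real" where
  "e2 i j X Y = X$i * Y$j - X$j * Y$i"

text \<open>Lie bracket determined by differentials de^1..de^6 via de^k(X,Y) = - e^k([X,Y]).\<close>
definition bracket_of_d ::
  "(real^6 \<Rightarrow> real^6 \<Rightarrow> real) \<Rightarrow> (real^6 \<Rightarrow> real^6 \<Rightarrow> real) \<Rightarrow> (real^6 \<Rightarrow> real^6 \<Rightarrow> real) \<Rightarrow>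
   (real^6 \<Rightarrow> real^6 \<Rightarrow> real) \<Rightarrow> (real^6 \<Rightarrow> real^6 \<Rightarrow> real) \<Rightarrow> (real^6 \<Rightarrow> real^6 \<Rightarrow> real) \<Rightarrow>
   real^6 \<Rightarrow> real^6 \<Rightarrow> real^6" where
  "bracket_of_d d1 d2 d3 d4 d5 d6 X Y =
     (\<chi> k. - (if k = 1 then d1 X Y else if k = 2 then d2 X Y else if k = 3 then d3 X Y
              else if k = 4 then d4 X Y else if k = 5 then d5 X Y else d6 X Y))"

text \<open>The Lie algebra g_{x,y}, x = x1 u1 + x2 u2, y = y1 u1^2 + y2 u1 u2 + y3 u2^2.\<close>
definition g_xy :: "real^2 \<Rightarrow> real^3 \<Rightarrow> real^6 \<Rightarrow> real^6 \<Rightarrow> real^6" where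
  "g_xy x y = (let x1 = x$1; x2 = x$2; y1 = y$1; y2 = y$2; y3 = y$3 in
     bracket_of_d
      (\<lambda>X Y. (x2*y1 - x1*y2) * e2 3 5 X Y - x1*y3 * (e2 3 6 X Y + e2 4 5 X Y) - x2*y3 * e2 4 6 X Y)
      (\<lambda>X Y. x1*y1 * e2 3 5 X Y - (x1*y3 - y2*x2) * e2 4 6 X Y + x2*y1 * (e2 3 6 X Y + e2 4 5 X Y))
      (\<lambda>X Y. - (x2*y1 - x1*y2) * e2 1 5 X Y + x1*y3 * (e2 1 6 X Y + e2 2 5 X Y) + x2*y3 * e2 2 6 X Y)
      (\<lambda>X Y. - x1*y1 * e2 1 5 X Y + (x1*y3 - y2*x2) * e2 2 6 X Y - x2*y1 * (e2 1 6 X Y + e2 2 5 X Y))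
      (\<lambda>X Y. (x2*y1 - x1*y2) * e2 1 3 X Y - x1*y3 * (e2 1 4 X Y + e2 2 3 X Y) - x2*y3 * e2 2 4 X Y)
      (\<lambda>X Y. x1*y1 * e2 1 3 X Y - (x1*y3 - y2*x2) * e2 2 4 X Y + x2*y1 * (e2 1 4 X Y + e2 2 3 X Y)))"

definition disc :: "real^3 \<Rightarrow> real" where
  "disc y = (y$2)^2 - 4 * y$1 * y$3"
definition resultant :: "real^2 \<Rightarrow> real^3 \<Rightarrow> real" where
  "resultant x y = (x$2)^2 * y$1 + y$3 * (x$1)^2 - y$2 * x$2 * x$1"

text \<open>Representatives (pairs of nonzero polynomials) of the subvarieties.\<close>
definition Mrep :: "((real^2) \<times> (real^3)) set" where
  "Mrep = {(x, y). x \<noteq> 0 \<and> y \<noteq> 0}"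
definition Mplus :: "((real^2) \<times> (real^3)) set" where
  "Mplus = {(x, y) \<in> Mrep. disc y > 0 \<and> resultant x y \<noteq> 0}"
definition Mminus :: "((real^2) \<times> (real^3)) set" where
  "Mminus = {(x, y) \<in> Mrep. disc y < 0 \<and> resultant x y \<noteq> 0}"
definition S1 :: "((real^2) \<times> (real^3)) set" where
  "S1 = {(x, y) \<in> Mrep. disc y = 0}"
definition S2 :: "((real^2) \<times> (real^3)) set" where
  "S2 = {(x, y) \<in> Mrep. resultant x y = 0}"
definition Cset :: "((real^2) \<times> (real^3)) set" where
  "Cset = S1 \<inter> S2"

text \<open>Standard embedding of RP^{n-1} into symmetric matrices, v \<mapsto> v v^T / |v|^2,
  giving a homeomorphic model of M = RP^1 \<times> RP^2 inside a Euclidean space.\<close>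
definition proj_emb :: "real^'n \<Rightarrow> real^'n^'n" where
  "proj_emb v = (\<chi> i j. v$i * v$j / (v \<bullet> v))"
definition M_emb :: "(real^2) \<times> (real^3) \<Rightarrow> (real^2^2) \<times> (real^3^3)" where
  "M_emb p = (proj_emb (fst p), proj_emb (snd p))"

definition lie_iso :: "(real^6 \<Rightarrow> real^6 \<Rightarrow> real^6) \<Rightarrow> (real^6 \<Rightarrow> real^6 \<Rightarrow> real^6) \<Rightarrow> bool" where
  "lie_iso b1 b2 \<longleftrightarrow> (\<exists>f. linear f \<and> bij f \<and> (\<forall>X Y. f (b1 X Y) = b2 (f X) (f Y)))"

definition lo :: "real^6 \<Rightarrow> real^3" where "lo X = (\<chi> i. if i = 1 then X$1 else if i = 2 then X$2 else X$3)"
definition hi :: "real^6 \<Rightarrow> real^3" where "hi X = (\<chi> i. if i = 1 then X$4 else if i = 2 then X$5 else X$6)"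
definition join :: "real^3 \<Rightarrow> real^3 \<Rightarrow> real^6" where
  "join a b = (\<chi> k. if k = 1 then a$1 else if k = 2 then a$2 else if k = 3 then a$3
                    else if k = 4 then b$1 else if k = 5 then b$2 else b$3)"

text \<open>Model Lie algebras (so(3) realised as (real^3, cross product)).\<close>
definition so3_so3 :: "real^6 \<Rightarrow> real^6 \<Rightarrow> real^6" where
  "so3_so3 X Y = join (cross3 (lo X) (lo Y)) (cross3 (hi X) (hi Y))"
text \<open>so(3,C) as a real Lie algebra: element a + i b with a, b in so(3).\<close>
definition so3C :: "real^6 \<Rightarrow> real^6 \<Rightarrow> real^6" where
  "so3C X Y = join (cross3 (lo X) (lo Y) - cross3 (hi X) (hi Y))
                   (cross3 (lo X) (hi Y) + cross3 (hi X) (lo Y))"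
definition so3_semi_R3 :: "real^6 \<Rightarrow> real^6 \<Rightarrow> real^6" where
  "so3_semi_R3 X Y = join (cross3 (lo X) (lo Y)) (cross3 (lo X) (hi Y) - cross3 (lo Y) (hi X))"
definition so3_sum_R3 :: "real^6 \<Rightarrow> real^6 \<Rightarrow> real^6" where
  "so3_sum_R3 X Y = join (cross3 (lo X) (lo Y)) 0"
definition nil_alg :: "real^6 \<Rightarrow> real^6 \<Rightarrow> real^6" where
  "nil_alg = bracket_of_d (\<lambda>X Y. 0) (\<lambda>X Y. 0) (\<lambda>X Y. 0) (e2 1 2) (e2 1 3) (e2 2 3)"

end

theory Submission
  imports Defs
begin

text \<open>The bracket \<open>g_xy x y\<close> is that of \<open>so(3) \<otimes> A\<close> for a two-dimensional commutative
  algebra \<open>A\<close>, and an isomorphism of such algebras induces one of the Lie algebras. Rotating the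
  basis of \<open>A\<close> by \<open>\<^bold>x\<close> makes the second basis vector act as multiplication by the resultant \<open>R\<close>.
  If \<open>R \<noteq> 0\<close> then \<open>A\<close> is unital, \<open>A \<cong> \<real>[t]/(t\<^sup>2 - p t - q)\<close> with \<open>p\<^sup>2 + 4 q\<close> a positive multiple
  of \<open>\<Delta>\<close>, hence \<open>\<real> \<oplus> \<real>\<close>, \<open>\<complex>\<close> or the dual numbers; if \<open>R = 0\<close> then \<open>A\<close> is \<open>\<real>\<close> plus a null
  line, or (when also \<open>\<Delta> = 0\<close>) the nilpotent algebra \<open>u\<^sup>2 = v\<close>.

  The sign of \<open>\<Delta>(\<^bold>y)/|\<^bold>y|\<^sup>2\<close>, a continuous function on \<open>\<M>\<close>, separates \<open>\<M>\<^sub>+\<close> from \<open>\<M>\<^sub>-\<close>; each of them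
  is connected, being parametrised by \<open>\<^bold>x \<noteq> 0\<close> and the coefficients of \<open>\<^bold>y\<close> in the rotated
  coordinates, which range over a convex set once the sign of \<open>\<Delta>\<close> and of \<open>R\<close> are fixed.\<close>

lemma exhaust_6:
  fixes i :: 6
  shows "i = 1 \<or> i = 2 \<or> i = 3 \<or> i = 4 \<or> i = 5 \<or> i = 6"
proof (induct i)
  case (of_int z)
  then have "z = 0 \<or> z = 1 \<or> z = 2 \<or> z = 3 \<or> z = 4 \<or> z = 5" by fastforce
  then show ?case by auto
qed

lemma forall_6: "(\<forall>i::6. P i) \<longleftrightarrow> P 1 \<and> P 2 \<and> P 3 \<and> P 4 \<and> P 5 \<and> P 6"
  by (metis exhaust_6)

lemma vec6_eq_iff:
  "(X::real^6) = Y \<longleftrightarrow> X$1 = Y$1 \<and> X$2 = Y$2 \<and> X$3 = Y$3 \<and> X$4 = Y$4 \<and> X$5 = Y$5 \<and> X$6 = Y$6"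
  by (simp add: vec_eq_iff forall_6)

lemma lie_isoI:
  assumes "linear f" "\<And>X. g (f X) = X" "\<And>X. f (g X) = X" "\<And>X Y. f (a X Y) = b (f X) (f Y)"
  shows "lie_iso a b"
  unfolding lie_iso_def using assms by (metis bijI')

lemma lie_iso_sym: "lie_iso a b \<Longrightarrow> lie_iso b a"
  unfolding lie_iso_def
proof (elim exE conjE)
  fix f assume f: "linear f" "bij f" "\<forall>X Y. f (a X Y) = b (f X) (f Y)"
  obtain g where g: "linear g" "g \<circ> f = id"
    using linear_injective_left_inverse[OF f(1)] f(2) bij_is_inj by blast
  have gf: "g (f X) = X" for X using g(2) by (metis comp_apply id_apply)
  have fg: "f (g X) = X" for X using f(2) gf by (metis bij_def surj_def)
  have "g (b X Y) = a (g X) (g Y)" for X Y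
    using f(3) gf fg by metis
  then show "\<exists>h. linear h \<and> bij h \<and> (\<forall>X Y. h (b X Y) = a (h X) (h Y))"
    using g(1) gf fg by (metis bijI')
qed

lemma lie_iso_trans: "lie_iso a b \<Longrightarrow> lie_iso b c \<Longrightarrow> lie_iso a c"
  unfolding lie_iso_def by (metis linear_compose bij_comp comp_apply)

section \<open>Lie algebras \<open>so(3) \<otimes> A\<close>\<close>

text \<open>The bracket of \<open>so(3) \<otimes> A\<close> for a commutative algebra \<open>A\<close> with basis \<open>u, v\<close> and
  \<open>u\<^sup>2 = p0 u + p1 v\<close>, \<open>u v = q0 u + q1 v\<close>, \<open>v\<^sup>2 = r0 u + r1 v\<close>.  A vector \<open>X\<close> encodes
  \<open>a \<otimes> u + b \<otimes> v\<close> with \<open>a = (X$1, X$3, X$5)\<close> and \<open>b = (X$2, X$4, X$6)\<close>, so that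
  \<open>[a \<otimes> u + b \<otimes> v, c \<otimes> u + d \<otimes> v] = (a \<times> c) \<otimes> u\<^sup>2 + (a \<times> d + b \<times> c) \<otimes> u v + (b \<times> d) \<otimes> v\<^sup>2\<close>.\<close>
definition so3_tensor :: "real \<Rightarrow> real \<Rightarrow> real \<Rightarrow> real \<Rightarrow> real \<Rightarrow> real \<Rightarrow> real^6 \<Rightarrow> real^6 \<Rightarrow> real^6" where
  "so3_tensor p0 p1 q0 q1 r0 r1 X Y = (let a1 = X$1; b1 = X$2; a2 = X$3; b2 = X$4; a3 = X$5; b3 = X$6;
     c1 = Y$1; d1 = Y$2; c2 = Y$3; d2 = Y$4; c3 = Y$5; d3 = Y$6;
     A1 = a2*c3 - a3*c2; A2 = a3*c1 - a1*c3; A3 = a1*c2 - a2*c1;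
     B1 = a2*d3 - a3*d2 + b2*c3 - b3*c2; B2 = a3*d1 - a1*d3 + b3*c1 - b1*c3;
     B3 = a1*d2 - a2*d1 + b1*c2 - b2*c1;
     C1 = b2*d3 - b3*d2; C2 = b3*d1 - b1*d3; C3 = b1*d2 - b2*d1 in
     (\<chi> k. if k = 1 then A1*p0 + B1*q0 + C1*r0 else if k = 2 then A1*p1 + B1*q1 + C1*r1
        else if k = 3 then A2*p0 + B2*q0 + C2*r0 else if k = 4 then A2*p1 + B2*q1 + C2*r1
        else if k = 5 then A3*p0 + B3*q0 + C3*r0 else A3*p1 + B3*q1 + C3*r1))"

lemma g_xy_eq_so3_tensor:
  "g_xy x y = so3_tensor (x$1*y$2 - x$2*y$1) (-x$1*y$1) (x$1*y$3) (-x$2*y$1) (x$2*y$3) (x$1*y$3 - x$2*y$2)"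
  by (simp add: fun_eq_iff vec6_eq_iff g_xy_def so3_tensor_def bracket_of_d_def e2_def Let_def
      algebra_simps)

text \<open>The map \<open>id \<otimes> \<phi>\<close>, where \<open>\<phi> u = ma u' + mc v'\<close> and \<open>\<phi> v = mb u' + md v'\<close>.\<close>
definition tensor_map :: "real \<Rightarrow> real \<Rightarrow> real \<Rightarrow> real \<Rightarrow> real^6 \<Rightarrow> real^6" where
  "tensor_map ma mb mc md X = (\<chi> k. if k = 1 then ma*X$1 + mb*X$2 else if k = 2 then mc*X$1 + md*X$2
      else if k = 3 then ma*X$3 + mb*X$4 else if k = 4 then mc*X$3 + md*X$4
      else if k = 5 then ma*X$5 + mb*X$6 else mc*X$5 + md*X$6)"

lemma linear_tensor_map: "linear (tensor_map ma mb mc md)"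
  by (rule linearI) (simp_all add: vec6_eq_iff tensor_map_def algebra_simps)

text \<open>The hypotheses say that \<open>\<phi>\<close> is multiplicative: \<open>\<phi>(u\<^sup>2) = \<phi>(u)\<^sup>2\<close>, \<open>\<phi>(u v) = \<phi>(u) \<phi>(v)\<close>
  and \<open>\<phi>(v\<^sup>2) = \<phi>(v)\<^sup>2\<close>.\<close>
lemma lie_iso_so3_tensorI:
  assumes "ma*md - mb*mc \<noteq> 0"
    and "ma*p0 + mb*p1 = ma^2*g0 + 2*ma*mc*h0 + mc^2*k0"
    and "mc*p0 + md*p1 = ma^2*g1 + 2*ma*mc*h1 + mc^2*k1"
    and "ma*q0 + mb*q1 = ma*mb*g0 + (ma*md + mc*mb)*h0 + mc*md*k0"
    and "mc*q0 + md*q1 = ma*mb*g1 + (ma*md + mc*mb)*h1 + mc*md*k1"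
    and "ma*r0 + mb*r1 = mb^2*g0 + 2*mb*md*h0 + md^2*k0"
    and "mc*r0 + md*r1 = mb^2*g1 + 2*mb*md*h1 + md^2*k1"
  shows "lie_iso (so3_tensor p0 p1 q0 q1 r0 r1) (so3_tensor g0 g1 h0 h1 k0 k1)"
proof (rule lie_isoI[OF linear_tensor_map])
  define d where "d = ma*md - mb*mc"
  have d: "d \<noteq> 0" using assms(1) by (simp add: d_def)
  show "tensor_map (md/d) (-mb/d) (-mc/d) (ma/d) (tensor_map ma mb mc md X) = X" for X
    using d unfolding vec6_eq_iff tensor_map_def by (simp add: field_simps) (simp add: d_def algebra_simps)
  show "tensor_map ma mb mc md (tensor_map (md/d) (-mb/d) (-mc/d) (ma/d) X) = X" for X
    using d unfolding vec6_eq_iff tensor_map_def by (simp add: field_simps) (simp add: d_def algebra_simps)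
  show "tensor_map ma mb mc md (so3_tensor p0 p1 q0 q1 r0 r1 X Y) =
        so3_tensor g0 g1 h0 h1 k0 k1 (tensor_map ma mb mc md X) (tensor_map ma mb mc md Y)" for X Y
    using assms(2-) unfolding vec6_eq_iff
    by (simp add: tensor_map_def so3_tensor_def Let_def) (intro conjI; algebra)
qed

definition deinterleave :: "real^6 \<Rightarrow> real^6" where
  "deinterleave X = (\<chi> k. if k = 1 then X$1 else if k = 2 then X$3 else if k = 3 then X$5
     else if k = 4 then X$2 else if k = 5 then X$4 else X$6)"
definition interleave :: "real^6 \<Rightarrow> real^6" where
  "interleave X = (\<chi> k. if k = 1 then X$1 else if k = 2 then X$4 else if k = 3 then X$2
     else if k = 4 then X$5 else if k = 5 then X$3 else X$6)"

lemma linear_deinterleave: "linear deinterleave"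
  by (rule linearI) (simp_all add: vec6_eq_iff deinterleave_def)

lemma interleave_deinterleave: "interleave (deinterleave X) = X" "deinterleave (interleave X) = X"
  by (simp_all add: vec6_eq_iff deinterleave_def interleave_def)

lemma cross3_components:
  "cross3 x y $ 1 = x$2*y$3 - x$3*y$2" "cross3 x y $ 2 = x$3*y$1 - x$1*y$3"
  "cross3 x y $ 3 = x$1*y$2 - x$2*y$1"
  by (simp_all add: cross3_def vector_def)

lemma join_components:
  "join a b $ 1 = a$1" "join a b $ 2 = a$2" "join a b $ 3 = a$3"
  "join a b $ 4 = b$1" "join a b $ 5 = b$2" "join a b $ 6 = b$3"
  by (simp_all add: join_def)

lemma lo_components: "lo X $ 1 = X$1" "lo X $ 2 = X$2" "lo X $ 3 = X$3"
  by (simp_all add: lo_def)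

lemma hi_components: "hi X $ 1 = X$4" "hi X $ 2 = X$5" "hi X $ 3 = X$6"
  by (simp_all add: hi_def)

lemmas model_simps = vec6_eq_iff deinterleave_def so3_tensor_def Let_def join_components
  lo_components hi_components cross3_components

lemma so3_tensor_split: "lie_iso (so3_tensor 1 0 0 0 0 1) so3_so3"
  by (rule lie_isoI[OF linear_deinterleave interleave_deinterleave])
    (simp add: model_simps so3_so3_def algebra_simps)

lemma so3_tensor_complex: "lie_iso (so3_tensor 1 0 0 1 (-1) 0) so3C"
  by (rule lie_isoI[OF linear_deinterleave interleave_deinterleave])
    (simp add: model_simps so3C_def algebra_simps)

lemma so3_tensor_dual_numbers: "lie_iso (so3_tensor 1 0 0 1 0 0) so3_semi_R3"
  by (rule lie_isoI[OF linear_deinterleave interleave_deinterleave])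
    (simp add: model_simps so3_semi_R3_def algebra_simps)

lemma so3_tensor_split_null: "lie_iso (so3_tensor 1 0 0 0 0 0) so3_sum_R3"
  by (rule lie_isoI[OF linear_deinterleave interleave_deinterleave])
    (simp add: model_simps so3_sum_R3_def algebra_simps)

definition nil_frame :: "real^6 \<Rightarrow> real^6" where
  "nil_frame X = (\<chi> k. if k = 1 then X$1 else if k = 2 then X$3 else if k = 3 then X$5
     else if k = 4 then - X$6 else if k = 5 then X$4 else - X$2)"
definition nil_frame_inv :: "real^6 \<Rightarrow> real^6" where
  "nil_frame_inv X = (\<chi> k. if k = 1 then X$1 else if k = 2 then - X$6 else if k = 3 then X$2
     else if k = 4 then X$5 else if k = 5 then X$3 else - X$4)"

lemma linear_nil_frame: "linear nil_frame"
  by (rule linearI) (simp_all add: vec6_eq_iff nil_frame_def)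

lemma nil_frame_inv: "nil_frame_inv (nil_frame X) = X" "nil_frame (nil_frame_inv X) = X"
  by (simp_all add: vec6_eq_iff nil_frame_def nil_frame_inv_def)

lemma so3_tensor_nilpotent: "lie_iso (so3_tensor 0 1 0 0 0 0) nil_alg"
  by (rule lie_isoI[OF linear_nil_frame nil_frame_inv])
    (simp add: vec6_eq_iff nil_frame_def so3_tensor_def Let_def nil_alg_def bracket_of_d_def e2_def
      algebra_simps)

text \<open>Unital case \<open>A = \<real>[t]/(t\<^sup>2 - p t - q)\<close> with \<open>u = t\<close> and \<open>v = 1\<close>.\<close>
lemma so3_tensor_unital_disc_pos:
  assumes "p^2 + 4*q > 0"
  shows "lie_iso (so3_tensor 1 0 0 0 0 1) (so3_tensor p q 1 0 0 1)"
proof -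
  define s where "s = sqrt (p^2 + 4*q)"
  have s: "s > 0" "q = (s^2 - p^2)/4" using assms by (simp_all add: s_def)
  show ?thesis
    by (rule lie_iso_so3_tensorI[where ma = "1/s" and mb = "-1/s" and mc = "-((p - s)/2)/s"
          and md = "((p + s)/2)/s"])
      (use s(1) in \<open>simp_all add: s(2) field_simps power2_eq_square\<close>)
qed

lemma so3_tensor_unital_disc_neg:
  assumes "p^2 + 4*q < 0"
  shows "lie_iso (so3_tensor 1 0 0 1 (-1) 0) (so3_tensor p q 1 0 0 1)"
proof -
  define w where "w = sqrt (-(p^2 + 4*q))"
  have w: "w > 0" "w^2 = -(p^2 + 4*q)" using assms by (simp_all add: w_def)
  show ?thesis
    by (rule lie_iso_so3_tensorI[where ma = 0 and mb = "2/w" and mc = 1 and md = "-p/w"])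
      (use w in \<open>simp_all add: field_simps power2_eq_square; algebra\<close>)+
qed

lemma so3_tensor_unital_disc_zero:
  assumes "p^2 + 4*q = 0"
  shows "lie_iso (so3_tensor 1 0 0 1 0 0) (so3_tensor p q 1 0 0 1)"
  by (rule lie_iso_so3_tensorI[where ma = 0 and mb = 1 and mc = 1 and md = "-p/2"])
    (use assms in \<open>simp_all add: field_simps power2_eq_square; algebra\<close>)+

lemma so3_tensor_rescale_unit:
  assumes "r \<noteq> 0"
  shows "lie_iso (so3_tensor (a/r) (b/r) 1 0 0 1) (so3_tensor a b r 0 0 r)"
  by (rule lie_iso_so3_tensorI[where ma = "1/r" and mb = 0 and mc = 0 and md = "1/r"])
    (use assms in \<open>simp_all add: field_simps power2_eq_square\<close>)

lemma so3_tensor_null_split: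
  assumes "a \<noteq> 0"
  shows "lie_iso (so3_tensor 1 0 0 0 0 0) (so3_tensor a b 0 0 0 0)"
  by (rule lie_iso_so3_tensorI[where ma = "1/a" and mb = 0 and mc = "b/a^2" and md = 1])
    (use assms in \<open>simp_all add: field_simps power2_eq_square\<close>)

lemma so3_tensor_null_nilpotent:
  assumes "b \<noteq> 0"
  shows "lie_iso (so3_tensor 0 1 0 0 0 0) (so3_tensor 0 b 0 0 0 0)"
  by (rule lie_iso_so3_tensorI[where ma = 1 and mb = 0 and mc = 0 and md = b])
    (use assms in \<open>simp_all add: field_simps power2_eq_square\<close>)

section \<open>The isomorphism type on each stratum\<close>

text \<open>With \<open>R = resultant x y\<close>, the triple \<open>(-\<beta>, \<alpha>, R)\<close> lists the coefficients of \<open>y\<close> in the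
  coordinates rotated by \<open>x\<close>: \<open>-\<beta> = y(x\<^sub>1, x\<^sub>2)\<close> and \<open>R = y(-x\<^sub>2, x\<^sub>1)\<close>.\<close>
definition alpha :: "real^2 \<Rightarrow> real^3 \<Rightarrow> real" where
  "alpha x y = y$2*((x$1)^2 - (x$2)^2) + 2*x$1*x$2*(y$3 - y$1)"
definition beta :: "real^2 \<Rightarrow> real^3 \<Rightarrow> real" where
  "beta x y = -(y$1*(x$1)^2 + y$2*x$1*x$2 + y$3*(x$2)^2)"

lemma alpha_beta_disc:
  "(alpha x y)^2 + 4 * beta x y * resultant x y = disc y * ((x$1)^2 + (x$2)^2)^2"
  by (simp add: alpha_def beta_def resultant_def disc_def power2_eq_square algebra_simps)

lemma norm2_pos: "(x::real^2) \<noteq> 0 \<Longrightarrow> (x$1)^2 + (x$2)^2 > 0"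
  by (simp add: vec_eq_iff forall_2)
    (metis add_pos_nonneg add_nonneg_pos zero_less_power2 zero_le_power2)

lemma alpha_beta_resultant_eq_0_iff:
  assumes x: "x \<noteq> 0"
  shows "alpha x y = 0 \<and> beta x y = 0 \<and> resultant x y = 0 \<longleftrightarrow> y = 0"
proof
  assume h: "alpha x y = 0 \<and> beta x y = 0 \<and> resultant x y = 0"
  define N where "N = (x$1)^2 + (x$2)^2"
  have N: "N > 0" using norm2_pos[OF x] by (simp add: N_def)
  have "resultant x y - beta x y = (y$1 + y$3) * N"
    by (simp add: resultant_def beta_def N_def algebra_simps power2_eq_square)
  moreover have "(y$1 - y$3) * N^2 = ((x$1)^2 - (x$2)^2) * (- beta x y - resultant x y)
      - 2*x$1*x$2*alpha x y"
    by (simp add: resultant_def beta_def alpha_def N_def algebra_simps power2_eq_square)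
  moreover have "y$2 * N^2 = 2*x$1*x$2*(- beta x y - resultant x y) + ((x$1)^2 - (x$2)^2) * alpha x y"
    by (simp add: resultant_def beta_def alpha_def N_def algebra_simps power2_eq_square)
  ultimately show "y = 0"
    using h N by (simp add: vec_eq_iff forall_3)
qed (simp add: alpha_def beta_def resultant_def)

text \<open>Rotating the basis \<open>u, v\<close> of \<open>A\<close> by \<open>x\<close> makes the second basis
  vector act as multiplication by the resultant.\<close>
lemma g_xy_adapted_basis:
  assumes "x \<noteq> 0"
  shows "lie_iso (so3_tensor (alpha x y) (beta x y) (resultant x y) 0 0 (resultant x y)) (g_xy x y)"
proof -
  have "x$1 * x$1 - (- x$2) * x$2 = (x$1)^2 + (x$2)^2"
    by (simp add: power2_eq_square)
  then have "x$1 * x$1 - (- x$2) * x$2 \<noteq> 0"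
    using norm2_pos[OF assms] by linarith
  then show ?thesis
    unfolding g_xy_eq_so3_tensor
    by (rule lie_iso_so3_tensorI[where ma = "x$1" and mb = "-x$2" and mc = "x$2" and md = "x$1"])
      (simp_all add: resultant_def alpha_def beta_def power2_eq_square algebra_simps)
qed

lemma g_xy_unital:
  assumes "x \<noteq> 0" "resultant x y \<noteq> 0"
  shows "lie_iso (so3_tensor (alpha x y / resultant x y) (beta x y / resultant x y) 1 0 0 1) (g_xy x y)"
  using so3_tensor_rescale_unit[OF assms(2)] g_xy_adapted_basis[OF assms(1)] by (rule lie_iso_trans)

lemma unital_disc:
  assumes "x \<noteq> 0" "resultant x y \<noteq> 0"
  shows "(alpha x y / resultant x y)^2 + 4 * (beta x y / resultant x y)
       = disc y * ((x$1)^2 + (x$2)^2)^2 / (resultant x y)^2"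
proof -
  have "(alpha x y / resultant x y)^2 + 4 * (beta x y / resultant x y)
      = ((alpha x y)^2 + 4 * beta x y * resultant x y) / (resultant x y)^2"
    using assms(2) by (simp add: field_simps power2_eq_square)
  then show ?thesis by (simp add: alpha_beta_disc)
qed

lemma g_xy_Mplus:
  assumes "(x, y) \<in> Mplus"
  shows "lie_iso (g_xy x y) so3_so3"
proof -
  have x: "x \<noteq> 0" and r: "resultant x y \<noteq> 0" and d: "disc y > 0"
    using assms by (auto simp: Mplus_def Mrep_def)
  have "(alpha x y / resultant x y)^2 + 4 * (beta x y / resultant x y) > 0"
    unfolding unital_disc[OF x r] using d norm2_pos[OF x] r
    by (intro divide_pos_pos mult_pos_pos) auto
  then show ?thesis
    by (meson g_xy_unital[OF x r] so3_tensor_unital_disc_pos so3_tensor_split lie_iso_sym lie_iso_trans)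
qed

lemma g_xy_Mminus:
  assumes "(x, y) \<in> Mminus"
  shows "lie_iso (g_xy x y) so3C"
proof -
  have x: "x \<noteq> 0" and r: "resultant x y \<noteq> 0" and d: "disc y < 0"
    using assms by (auto simp: Mminus_def Mrep_def)
  have "(alpha x y / resultant x y)^2 + 4 * (beta x y / resultant x y) < 0"
    unfolding unital_disc[OF x r] using d norm2_pos[OF x] r
    by (intro divide_neg_pos mult_neg_pos) auto
  then show ?thesis
    by (meson g_xy_unital[OF x r] so3_tensor_unital_disc_neg so3_tensor_complex lie_iso_sym lie_iso_trans)
qed

lemma g_xy_S1_minus_C:
  assumes "(x, y) \<in> S1 - Cset"
  shows "lie_iso (g_xy x y) so3_semi_R3"
proof -
  have x: "x \<noteq> 0" and r: "resultant x y \<noteq> 0" and d: "disc y = 0"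
    using assms by (auto simp: S1_def S2_def Cset_def Mrep_def)
  have "(alpha x y / resultant x y)^2 + 4 * (beta x y / resultant x y) = 0"
    unfolding unital_disc[OF x r] using d by simp
  then show ?thesis
    by (meson g_xy_unital[OF x r] so3_tensor_unital_disc_zero so3_tensor_dual_numbers
        lie_iso_sym lie_iso_trans)
qed

lemma g_xy_S2_minus_C:
  assumes "(x, y) \<in> S2 - Cset"
  shows "lie_iso (g_xy x y) so3_sum_R3"
proof -
  have x: "x \<noteq> 0" and r: "resultant x y = 0" and d: "disc y \<noteq> 0"
    using assms by (auto simp: S1_def S2_def Cset_def Mrep_def)
  have "alpha x y \<noteq> 0"
    using alpha_beta_disc[of x y] r d norm2_pos[OF x] by auto
  then show ?thesis
    using g_xy_adapted_basis[OF x, of y] r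
    by (metis so3_tensor_null_split so3_tensor_split_null lie_iso_sym lie_iso_trans)
qed

lemma g_xy_C:
  assumes "(x, y) \<in> Cset"
  shows "lie_iso (g_xy x y) nil_alg"
proof -
  have x: "x \<noteq> 0" and y: "y \<noteq> 0" and r: "resultant x y = 0" and d: "disc y = 0"
    using assms by (auto simp: S1_def S2_def Cset_def Mrep_def)
  have a: "alpha x y = 0"
    using alpha_beta_disc[of x y] r d by simp
  then have "beta x y \<noteq> 0"
    using alpha_beta_resultant_eq_0_iff[OF x] y r by blast
  then show ?thesis
    using g_xy_adapted_basis[OF x, of y] r a
    by (metis so3_tensor_null_nilpotent so3_tensor_nilpotent lie_iso_sym lie_iso_trans)
qed

section \<open>The components of the generic locus\<close>

lemma connected_subset_sign_separated:
  fixes g :: "'a::topological_space \<Rightarrow> real"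
  assumes "connected D" "D \<subseteq> A \<union> B" "continuous_on (A \<union> B) g"
    and "\<forall>q\<in>A. g q > 0" "\<forall>q\<in>B. g q < 0"
  shows "D \<subseteq> A \<or> D \<subseteq> B"
proof (rule ccontr)
  assume "\<not> (D \<subseteq> A \<or> D \<subseteq> B)"
  then obtain d1 d2 where d: "d1 \<in> D" "d1 \<notin> A" "d2 \<in> D" "d2 \<notin> B" by blast
  then have "g d1 < 0" "g d2 > 0" using assms by auto
  moreover have "connected (g ` D)"
    using connected_continuous_image[OF continuous_on_subset[OF assms(3,2)] assms(1)] .
  ultimately have "0 \<in> g ` D"
    unfolding connected_iff_interval using d by (metis image_eqI less_imp_le)
  then show False using assms by force
qed

lemma components_sign_separated:
  fixes g :: "'a::topological_space \<Rightarrow> real"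
  assumes "A \<noteq> {}" "B \<noteq> {}" "connected A" "connected B" "continuous_on (A \<union> B) g"
    and "\<forall>q\<in>A. g q > 0" "\<forall>q\<in>B. g q < 0"
  shows "components (A \<union> B) = {A, B}"
proof -
  have sub: "D \<subseteq> A \<or> D \<subseteq> B" if "connected D" "D \<subseteq> A \<union> B" for D
    using connected_subset_sign_separated[OF that assms(5-7)] .
  have disj: "A \<inter> B = {}" using assms(6,7) by force
  have "A \<in> components (A \<union> B)" "B \<in> components (A \<union> B)"
    unfolding in_components_maximal using assms(1-4) sub disj by blast+
  moreover have "C = A \<or> C = B" if "C \<in> components (A \<union> B)" for C
    using that sub assms(1-4) unfolding in_components_maximal by (metis Un_upper1 Un_upper2)
  ultimately show ?thesis by blast
qed

text \<open>The inverse of \<open>y \<mapsto> (-beta x y, alpha x y, resultant x y)\<close> for \<open>x \<noteq> 0\<close>.\<close>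
definition y_of_coeffs :: "real^2 \<Rightarrow> real \<Rightarrow> real \<Rightarrow> real \<Rightarrow> real^3" where
  "y_of_coeffs x z1 z2 z3 = (let N = (x$1)^2 + (x$2)^2 in
     (\<chi> i. if i = 1 then (z1*(x$1)^2 - z2*x$1*x$2 + z3*(x$2)^2) / N^2
           else if i = 2 then (2*z1*x$1*x$2 + z2*((x$1)^2 - (x$2)^2) - 2*z3*x$1*x$2) / N^2
           else (z1*(x$2)^2 + z2*x$1*x$2 + z3*(x$1)^2) / N^2))"

lemma y_of_coeffs_components:
  "y_of_coeffs x z1 z2 z3 $ 1 = (z1*(x$1)^2 - z2*x$1*x$2 + z3*(x$2)^2) / ((x$1)^2 + (x$2)^2)^2"
  "y_of_coeffs x z1 z2 z3 $ 2 =
     (2*z1*x$1*x$2 + z2*((x$1)^2 - (x$2)^2) - 2*z3*x$1*x$2) / ((x$1)^2 + (x$2)^2)^2"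
  "y_of_coeffs x z1 z2 z3 $ 3 = (z1*(x$2)^2 + z2*x$1*x$2 + z3*(x$1)^2) / ((x$1)^2 + (x$2)^2)^2"
  by (simp_all add: y_of_coeffs_def Let_def)

lemma resultant_y_of_coeffs:
  assumes "x \<noteq> 0"
  shows "resultant x (y_of_coeffs x z1 z2 z3) = z3"
proof -
  define M where "M = ((x$1)^2 + (x$2)^2)^2"
  have M: "M \<noteq> 0" unfolding M_def using norm2_pos[OF assms] by (metis zero_less_power less_irrefl)
  have "resultant x (y_of_coeffs x z1 z2 z3) * M = z3 * M"
    unfolding resultant_def y_of_coeffs_components M_def[symmetric] using M
    by (simp add: field_simps) (unfold M_def, algebra)
  then show ?thesis using M by simp
qed

lemma disc_y_of_coeffs:
  assumes "x \<noteq> 0"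
  shows "disc (y_of_coeffs x z1 z2 z3) * ((x$1)^2 + (x$2)^2)^2 = z2^2 - 4*z1*z3"
proof -
  define M where "M = ((x$1)^2 + (x$2)^2)^2"
  have M: "M \<noteq> 0" unfolding M_def using norm2_pos[OF assms] by (metis zero_less_power less_irrefl)
  have "disc (y_of_coeffs x z1 z2 z3) * M * M = (z2^2 - 4*z1*z3) * M"
    unfolding disc_def y_of_coeffs_components M_def[symmetric] using M
    by (simp add: field_simps) (unfold M_def, algebra)
  then have "disc (y_of_coeffs x z1 z2 z3) * M = z2^2 - 4*z1*z3"
    using M by (metis mult_right_cancel)
  then show ?thesis by (simp only: M_def)
qed

lemma y_of_coeffs_alpha_beta:
  assumes "x \<noteq> 0"
  shows "y_of_coeffs x (- beta x y) (alpha x y) (resultant x y) = y"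
proof -
  define M where "M = ((x$1)^2 + (x$2)^2)^2"
  have M: "M \<noteq> 0" unfolding M_def using norm2_pos[OF assms] by (metis zero_less_power less_irrefl)
  let ?y = "y_of_coeffs x (- beta x y) (alpha x y) (resultant x y)"
  have "?y $ 1 * M = y $ 1 * M" "?y $ 2 * M = y $ 2 * M" "?y $ 3 * M = y $ 3 * M"
    unfolding y_of_coeffs_components M_def[symmetric] using M
    by (simp add: field_simps; unfold M_def beta_def alpha_def resultant_def; algebra)+
  then show ?thesis using M by (simp add: vec_eq_iff forall_3)
qed

definition param_dom :: "((real^2) \<times> (real^3)) set" where
  "param_dom = (- {0}) \<times> {v. 0 < v$1 \<and> 0 < v$3}"

text \<open>For \<open>v\<^sub>1, v\<^sub>3 > 0\<close> the image has resultant \<open>v\<^sub>3\<close> and discriminant \<open>4 s v\<^sub>1 v\<^sub>3 / |x|\<^sup>4\<close>.\<close>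
definition sign_param :: "real \<Rightarrow> (real^2) \<times> (real^3) \<Rightarrow> (real^2) \<times> (real^3)" where
  "sign_param s q = (let x = fst q; v = snd q in
     (x, y_of_coeffs x ((v$2)^2 / (4 * v$3) - s * v$1) (v$2) (v$3)))"

lemma path_connected_param_dom: "path_connected param_dom"
proof -
  have "{v::real^3. 0 < v$1 \<and> 0 < v$3} = {v. axis 1 1 \<bullet> v > 0} \<inter> {v. axis 3 1 \<bullet> v > 0}"
    by (auto simp: inner_commute inner_axis)
  then have "convex {v::real^3. 0 < v$1 \<and> 0 < v$3}"
    by (simp add: convex_Int convex_halfspace_gt)
  then show ?thesis
    unfolding param_dom_def
    by (intro path_connected_Times path_connected_punctured_universe convex_imp_path_connected) simp
qed

lemma continuous_on_param_dom_sign_param: "continuous_on param_dom (sign_param s)"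
proof -
  have cases_cont: "continuous_on S f \<Longrightarrow> continuous_on S g \<Longrightarrow>
      continuous_on S (\<lambda>x. if P then f x else g x)" for S P and f g :: "_ \<Rightarrow> real"
    by (cases P) auto
  show ?thesis
    unfolding sign_param_def y_of_coeffs_def Let_def param_dom_def
    by (intro continuous_intros cases_cont) (auto dest!: norm2_pos)
qed

definition disc_stratum :: "real \<Rightarrow> ((real^2) \<times> (real^3)) set" where
  "disc_stratum t = {(x, y) \<in> Mrep. sgn (disc y) = t \<and> resultant x y \<noteq> 0}"

lemma Mplus_eq_disc_stratum: "Mplus = disc_stratum 1"
  by (auto simp: Mplus_def disc_stratum_def sgn_1_pos)

lemma Mminus_eq_disc_stratum: "Mminus = disc_stratum (-1)"
  by (auto simp: Mminus_def disc_stratum_def sgn_1_neg)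

lemma disc_stratum_subset_Mrep: "disc_stratum t \<subseteq> Mrep"
  by (auto simp: disc_stratum_def)

lemma sign_param_in_disc_stratum:
  assumes "q \<in> param_dom"
  shows "sign_param s q \<in> disc_stratum (sgn s)"
proof -
  obtain x v where q: "q = (x, v)" "x \<noteq> 0" "0 < v$1" "0 < v$3"
    using assms by (auto simp: param_dom_def)
  define z1 where "z1 = (v$2)^2 / (4 * v$3) - s * v$1"
  let ?y = "y_of_coeffs x z1 (v$2) (v$3)"
  have "(v$2)^2 - 4 * z1 * v$3 = 4 * s * v$1 * v$3"
    using q by (simp add: z1_def field_simps)
  then have "disc ?y * ((x$1)^2 + (x$2)^2)^2 = 4 * s * v$1 * v$3"
    using disc_y_of_coeffs[OF q(2)] by simp
  moreover have N: "0 < ((x$1)^2 + (x$2)^2)^2"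
    using norm2_pos[OF q(2)] by (rule zero_less_power)
  ultimately have "disc ?y = s * (4 * v$1 * v$3 / ((x$1)^2 + (x$2)^2)^2)"
    by (simp add: field_simps)
  moreover have "0 < 4 * v$1 * v$3 / ((x$1)^2 + (x$2)^2)^2"
    using q(3,4) N by simp
  ultimately have "sgn (disc ?y) = sgn s"
    by (simp only: sgn_mult sgn_pos mult_1_right)
  moreover have "resultant x ?y = v$3"
    using resultant_y_of_coeffs[OF q(2)] .
  moreover have "?y \<noteq> 0"
    using calculation q by (auto simp: resultant_def)
  ultimately show ?thesis
    using q by (simp add: sign_param_def z1_def disc_stratum_def Mrep_def)
qed

lemma sign_param_onto:
  assumes "s \<noteq> 0" "x \<noteq> 0" "sgn (disc y) = sgn s" "resultant x y > 0"
  shows "(x, y) \<in> sign_param s ` param_dom"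
proof -
  define v :: "real^3" where
    "v = (\<chi> i. if i = 1 then (alpha x y ^ 2 + 4 * beta x y * resultant x y) / (4 * resultant x y * s)
              else if i = 2 then alpha x y else resultant x y)"
  have "v$1 = disc y * ((x$1)^2 + (x$2)^2)^2 / (4 * resultant x y * s)"
    by (simp add: v_def alpha_beta_disc)
  moreover have N: "0 < ((x$1)^2 + (x$2)^2)^2"
    using norm2_pos[OF assms(2)] by (rule zero_less_power)
  moreover have "disc y * ((x$1)^2 + (x$2)^2)^2 / (4 * resultant x y * s) > 0"
  proof (cases "s > 0")
    case True
    then have "disc y > 0" using assms(3) by (simp add: sgn_1_pos[symmetric])
    then show ?thesis using True assms(4) N
      by (intro divide_pos_pos mult_pos_pos) simp_all
  next
    case False
    then have "s < 0" using assms(1) by linarith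
    moreover have "disc y < 0" using calculation assms(3) by (simp add: sgn_1_neg[symmetric])
    ultimately
    show ?thesis using assms(4) N
      by (intro divide_neg_neg mult_neg_pos mult_pos_neg) simp_all
  qed
  ultimately have v1: "v$1 > 0" by simp
  have "(v$2)^2 / (4 * v$3) - s * v$1 = - beta x y"
    using assms(1,4) by (simp add: v_def field_simps power2_eq_square)
  then have "sign_param s (x, v) = (x, y)"
    by (simp add: sign_param_def v_def y_of_coeffs_alpha_beta[OF assms(2)])
  moreover have "(x, v) \<in> param_dom"
    using v1 assms(2,4) by (simp add: param_dom_def v_def)
  ultimately show ?thesis by (metis image_eqI)
qed

lemma M_emb_neg_snd: "M_emb (x, - y) = M_emb (x, y)"
  by (simp add: M_emb_def proj_emb_def)

lemma M_emb_disc_stratum: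
  assumes "s \<noteq> 0"
  shows "M_emb ` disc_stratum (sgn s) = (M_emb \<circ> sign_param s) ` param_dom"
proof
  show "(M_emb \<circ> sign_param s) ` param_dom \<subseteq> M_emb ` disc_stratum (sgn s)"
    using sign_param_in_disc_stratum by (metis image_comp image_mono image_subsetI)
  show "M_emb ` disc_stratum (sgn s) \<subseteq> (M_emb \<circ> sign_param s) ` param_dom"
  proof (rule image_subsetI)
    fix p assume "p \<in> disc_stratum (sgn s)"
    then obtain x y where p: "p = (x, y)" "x \<noteq> 0" "sgn (disc y) = sgn s" "resultant x y \<noteq> 0"
      by (auto simp: disc_stratum_def Mrep_def)
    \<comment> \<open>\<open>-y\<close> has the opposite resultant but represents the same point of \<open>\<M>\<close>.\<close>
    obtain y' where y': "M_emb (x, y') = M_emb p" "sgn (disc y') = sgn s" "resultant x y' > 0"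
    proof (cases "resultant x y > 0")
      case True
      then show ?thesis using that[of y] p by blast
    next
      case False
      then have "resultant x (- y) > 0" using p(4) by (simp add: resultant_def)
      moreover have "disc (- y) = disc y" by (simp add: disc_def)
      ultimately show ?thesis using that[of "- y"] p by (simp add: M_emb_neg_snd)
    qed
    then have "(x, y') \<in> sign_param s ` param_dom"
      using sign_param_onto[OF assms p(2)] by blast
    then show "M_emb p \<in> (M_emb \<circ> sign_param s) ` param_dom"
      unfolding image_comp[symmetric] y'(1)[symmetric] by (rule imageI)
  qed
qed

lemma continuous_on_M_emb: "continuous_on Mrep M_emb"
  unfolding M_emb_def proj_emb_def Mrep_def
  by (intro continuous_intros) (auto simp: case_prod_beta)

lemma connected_M_emb_disc_stratum:
  assumes "s \<noteq> 0"
  shows "connected (M_emb ` disc_stratum (sgn s))"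
proof -
  have "sign_param s ` param_dom \<subseteq> Mrep"
    using sign_param_in_disc_stratum disc_stratum_subset_Mrep by blast
  then have "continuous_on param_dom (M_emb \<circ> sign_param s)"
    by (intro continuous_on_compose continuous_on_param_dom_sign_param
        continuous_on_subset[OF continuous_on_M_emb])
  then show ?thesis
    unfolding M_emb_disc_stratum[OF assms]
    by (intro path_connected_imp_connected path_connected_continuous_image path_connected_param_dom)
qed

text \<open>On the image of \<open>M_emb\<close> this is \<open>disc y / |y|\<^sup>2\<close>.\<close>
definition disc_chart :: "(real^2^2) \<times> (real^3^3) \<Rightarrow> real" where
  "disc_chart q = snd q $ 2 $ 2 - 4 * snd q $ 1 $ 3"

lemma sgn_disc_chart:
  assumes "p \<in> disc_stratum t"
  shows "sgn (disc_chart (M_emb p)) = t"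
proof -
  obtain x y where p: "p = (x, y)" "y \<noteq> 0" "sgn (disc y) = t"
    using assms by (auto simp: disc_stratum_def Mrep_def)
  have "disc_chart (M_emb p) = disc y / (y \<bullet> y)"
    using p(2) by (simp add: p disc_chart_def M_emb_def proj_emb_def disc_def field_simps power2_eq_square)
  then show ?thesis
    using p by (simp add: sgn_divide)
qed

lemma disc_chart_M_emb_Mplus: "q \<in> M_emb ` Mplus \<Longrightarrow> disc_chart q > 0"
  using sgn_disc_chart unfolding Mplus_eq_disc_stratum by (fastforce simp: sgn_1_pos)

lemma disc_chart_M_emb_Mminus: "q \<in> M_emb ` Mminus \<Longrightarrow> disc_chart q < 0"
  using sgn_disc_chart unfolding Mminus_eq_disc_stratum by (fastforce simp: sgn_1_neg)

lemma Mplus_nonempty: "Mplus \<noteq> {}"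
proof -
  let ?x = "\<chi> i. if i = 1 then 1 else 0 :: real^2"
  let ?y = "\<chi> i. if i = 1 then 1 else if i = 2 then 0 else -1 :: real^3"
  have "?x \<noteq> 0" "?y \<noteq> 0" "disc ?y > 0" "resultant ?x ?y \<noteq> 0"
    by (simp_all add: vec_eq_iff forall_2 forall_3 disc_def resultant_def)
  then have "(?x, ?y) \<in> Mplus"
    by (simp add: Mplus_def Mrep_def)
  then show ?thesis by blast
qed

lemma Mminus_nonempty: "Mminus \<noteq> {}"
proof -
  let ?x = "\<chi> i. if i = 1 then 1 else 0 :: real^2"
  let ?y = "\<chi> i. if i = 2 then 0 else 1 :: real^3"
  have "?x \<noteq> 0" "?y \<noteq> 0" "disc ?y < 0" "resultant ?x ?y \<noteq> 0"
    by (simp_all add: vec_eq_iff forall_2 forall_3 disc_def resultant_def)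
  then have "(?x, ?y) \<in> Mminus"
    by (simp add: Mminus_def Mrep_def)
  then show ?thesis by blast
qed

lemma components_M_emb_generic:
  "components (M_emb ` (Mrep - (S1 \<union> S2))) = {M_emb ` Mplus, M_emb ` Mminus}"
proof -
  have "Mrep - (S1 \<union> S2) = Mplus \<union> Mminus"
    by (auto simp: Mrep_def S1_def S2_def Mplus_def Mminus_def)
  then have split: "M_emb ` (Mrep - (S1 \<union> S2)) = M_emb ` Mplus \<union> M_emb ` Mminus"
    by (simp add: image_Un)
  have conn: "connected (M_emb ` Mplus)" "connected (M_emb ` Mminus)"
    using connected_M_emb_disc_stratum[of 1] connected_M_emb_disc_stratum[of "-1"]
    by (simp_all add: Mplus_eq_disc_stratum Mminus_eq_disc_stratum)
  have cont: "continuous_on (M_emb ` Mplus \<union> M_emb ` Mminus) disc_chart"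
    unfolding disc_chart_def by (intro continuous_intros)
  have ne: "M_emb ` Mplus \<noteq> {}" "M_emb ` Mminus \<noteq> {}"
    using Mplus_nonempty Mminus_nonempty by simp_all
  show ?thesis
    unfolding split using disc_chart_M_emb_Mplus disc_chart_M_emb_Mminus
    by (intro components_sign_separated[OF ne conn cont]) auto
qed

lemma M_emb_Mplus_ne_Mminus: "M_emb ` Mplus \<noteq> M_emb ` Mminus"
proof
  assume eq: "M_emb ` Mplus = M_emb ` Mminus"
  obtain q where q: "q \<in> M_emb ` Mplus"
    using Mplus_nonempty by blast
  then have "disc_chart q > 0"
    by (rule disc_chart_M_emb_Mplus)
  moreover have "disc_chart q < 0"
    using q unfolding eq by (rule disc_chart_M_emb_Mminus)
  ultimately show False by simp
qed

theorem theorem3p12: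
  shows "components (M_emb ` (Mrep - (S1 \<union> S2))) = {M_emb ` Mplus, M_emb ` Mminus}
         \<and> M_emb ` Mplus \<noteq> M_emb ` Mminus
         \<and> (\<forall>p \<in> Mplus. lie_iso (g_xy (fst p) (snd p)) so3_so3)
         \<and> (\<forall>p \<in> Mminus. lie_iso (g_xy (fst p) (snd p)) so3C)
         \<and> (\<forall>p \<in> S1 - Cset. lie_iso (g_xy (fst p) (snd p)) so3_semi_R3)
         \<and> (\<forall>p \<in> S2 - Cset. lie_iso (g_xy (fst p) (snd p)) so3_sum_R3)
         \<and> (\<forall>p \<in> Cset. lie_iso (g_xy (fst p) (snd p)) nil_alg)"
proof -
  have "lie_iso (g_xy (fst p) (snd p)) so3_so3" if "p \<in> Mplus" for p
    using g_xy_Mplus[of "fst p" "snd p"] that by simp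
  moreover have "lie_iso (g_xy (fst p) (snd p)) so3C" if "p \<in> Mminus" for p
    using g_xy_Mminus[of "fst p" "snd p"] that by simp
  moreover have "lie_iso (g_xy (fst p) (snd p)) so3_semi_R3" if "p \<in> S1 - Cset" for p
    using g_xy_S1_minus_C[of "fst p" "snd p"] that by simp
  moreover have "lie_iso (g_xy (fst p) (snd p)) so3_sum_R3" if "p \<in> S2 - Cset" for p
    using g_xy_S2_minus_C[of "fst p" "snd p"] that by simp
  moreover have "lie_iso (g_xy (fst p) (snd p)) nil_alg" if "p \<in> Cset" for p
    using g_xy_C[of "fst p" "snd p"] that by simp
  ultimately show ?thesis
    using components_M_emb_generic M_emb_Mplus_ne_Mminus by blast
qed

end
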